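(* Let $(A,B)$ be a random vector, $(A_n,B_n)_{n\in\mathbb N}$ i.i.d. copies, $X=\sum_{k\ge1}\Pi_{k-1}B_k$ with $|X|<\infty$ a.s. Assume $\mathbb P\{A=0\}=0$, $\mathbb P\{B=0\}<1$, $\mathbb P\{B+Ac=c\}<1$ for all $c\in\mathbb R$, and $\mathbb P\{A\in(0,1]\}=1$. If $\mathbb E e^{rX}<\infty$ for some $r>0$, then $\mathbb E e^{rB}\mathbf 1_{\{A=1\}}<1$ (regardless of whether the support of the distribution of $X$ is bounded from the right).
   Context: $\Pi_0:=1$, $\Pi_n:=A_1\cdots A_n$. *)

theory Defs
  imports "HOL-Probability.Probability"
begin

text \<open>Perpetuity X = sum over k of (A_0 ... A_(k-1)) B_k, indices shifted to start at 0.\<close>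
definition perpetuity :: "(nat \<Rightarrow> 'a \<Rightarrow> real) \<Rightarrow> (nat \<Rightarrow> 'a \<Rightarrow> real) \<Rightarrow> 'a \<Rightarrow> real" where
  "perpetuity As Bs \<omega> = (\<Sum>k. (\<Prod>i<k. As i \<omega>) * Bs k \<omega>)"

end

theory Submission
  imports Defs
begin

text \<open>
  Write the perpetuity as X = B1 + A1 X' with X' an independent copy of X. Then
  \<phi> = E exp(r X) satisfies \<phi> = c \<phi> + R with c = E[exp(r B); A = 1] and
  R = E[exp(r (B + A X')); A \<noteq> 1]. Here R > 0: if A = 1 a.s., convergence of the series
  forces B_n \<longrightarrow> 0 a.s., which the second Borel-Cantelli lemma rules out when P{B = 0} < 1.
  As \<phi> < \<infinity>, this forces c < 1.
\<close>

lemma measurable_summable [measurable]: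
  fixes f :: "nat \<Rightarrow> 'a \<Rightarrow> real"
  assumes [measurable]: "\<And>i. f i \<in> borel_measurable M"
  shows "Measurable.pred M (\<lambda>x. summable (\<lambda>i. f i x))"
proof -
  have "summable (\<lambda>i. f i x) \<longleftrightarrow> Cauchy (\<lambda>n. \<Sum>i<n. f i x)" for x
    by (simp add: summable_iff_convergent Cauchy_convergent_iff)
  then show ?thesis
    by (simp add: pred_def) measurable
qed

lemma ennreal_factor_less_one_of_fixed_point:
  fixes x c R :: ennreal
  assumes "x < \<infinity>" and "x = c * x + R" and "R \<noteq> 0"
  shows "c < 1"
proof (rule ccontr)
  assume "\<not> c < 1"
  then have "x + R \<le> c * x + R"
    by (intro add_right_mono) (metis mult_1 mult_right_mono not_less zero_le)
  then have "x + R \<le> x + 0"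
    using assms(2) by simp
  then show False
    using assms by (auto simp: ennreal_add_left_cancel_le)
qed

lemma (in sequence_space) AE_frequently_in:
  assumes E[measurable]: "E \<in> sets M" and pos: "emeasure M E \<noteq> 0"
  shows "AE \<omega> in S. \<exists>\<^sub>F k in sequentially. \<omega> k \<in> E"
proof -
  define q where "q = measure M (space M - E)"
  have "measure M E > 0"
    using pos by (simp add: M.emeasure_eq_measure zero_less_measure_iff)
  then have q: "0 \<le> q" "q < 1"
    using M.prob_compl[OF E] by (simp_all add: q_def)
  define N where "N n = {\<omega>\<in>space S. \<forall>k\<ge>n. \<omega> k \<notin> E}" for n
  have N_null: "N n \<in> null_sets S" for n
  proof -
    have "measure S (N n) \<le> q ^ m" for m
    proof -
      have "N n \<subseteq> {\<omega>\<in>space S. \<forall>i\<in>{n..<n+m}. \<omega> i \<in> space M - E}"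
        by (auto simp: N_def space_PiM PiE_iff)
      then have "measure S (N n) \<le> measure S {\<omega>\<in>space S. \<forall>i\<in>{n..<n+m}. \<omega> i \<in> space M - E}"
        by (intro P.finite_measure_mono) measurable
      also have "emeasure S {\<omega>\<in>space S. \<forall>i\<in>{n..<n+m}. \<omega> i \<in> space M - E} = ennreal (q ^ m)"
        by (subst emeasure_PiM_Collect) (auto simp: q_def M.emeasure_eq_measure ennreal_power)
      then have "measure S {\<omega>\<in>space S. \<forall>i\<in>{n..<n+m}. \<omega> i \<in> space M - E} = q ^ m"
        using q by (simp add: P.emeasure_eq_measure)
      finally show ?thesis .
    qed
    then have "measure S (N n) \<le> 0"
      using q by (intro tendsto_le[OF sequentially_bot LIMSEQ_power_zero[of q] tendsto_const]) auto
    moreover have "N n \<in> sets S"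
      unfolding N_def by measurable
    ultimately show ?thesis
      by (simp add: P.emeasure_eq_measure null_sets_def measure_le_0_iff)
  qed
  have "AE \<omega> in S. \<omega> \<notin> (\<Union>n. N n)"
    using null_sets_UN[OF N_null] by (rule AE_not_in)
  then show ?thesis
    by (rule AE_mp) (auto simp: N_def frequently_def eventually_sequentially)
qed

lemma exists_emeasure_abs_gt_nonzero:
  fixes g :: "'a \<Rightarrow> real"
  assumes [measurable]: "g \<in> borel_measurable M"
    and "emeasure M {x\<in>space M. g x \<noteq> 0} \<noteq> 0"
  obtains \<epsilon> where "\<epsilon> > 0" and "emeasure M {x\<in>space M. \<epsilon> < \<bar>g x\<bar>} \<noteq> 0"
proof (rule ccontr)
  assume "\<not> thesis"
  then have "{x\<in>space M. 1 / Suc j < \<bar>g x\<bar>} \<in> null_sets M" for j :: nat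
    using that[of "1 / Suc j"] by (auto simp: null_sets_def)
  then have "(\<Union>j::nat. {x\<in>space M. 1 / Suc j < \<bar>g x\<bar>}) \<in> null_sets M"
    by (rule null_sets_UN)
  moreover have "{x\<in>space M. g x \<noteq> 0} \<subseteq> (\<Union>j::nat. {x\<in>space M. 1 / Suc j < \<bar>g x\<bar>})"
  proof
    fix x assume x: "x \<in> {x\<in>space M. g x \<noteq> 0}"
    then obtain j :: nat where "1 / Suc j < \<bar>g x\<bar>"
      using nat_approx_posE[of "\<bar>g x\<bar>"] by auto
    with x show "x \<in> (\<Union>j::nat. {x\<in>space M. 1 / Suc j < \<bar>g x\<bar>})"
      by blast
  qed
  moreover have "{x\<in>space M. g x \<noteq> 0} \<in> sets M"
    by measurable
  ultimately have "{x\<in>space M. g x \<noteq> 0} \<in> null_sets M"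
    using null_sets_subset by blast
  then show False
    using assms(2) by auto
qed

lemma (in sequence_space) not_AE_tendsto_zero:
  fixes g :: "'a \<Rightarrow> real"
  assumes [measurable]: "g \<in> borel_measurable M"
    and "emeasure M {x\<in>space M. g x \<noteq> 0} \<noteq> 0"
  shows "\<not> (AE \<omega> in S. (\<lambda>k. g (\<omega> k)) \<longlonglongrightarrow> 0)"
proof
  obtain \<epsilon> where "\<epsilon> > 0" and pos: "emeasure M {x\<in>space M. \<epsilon> < \<bar>g x\<bar>} \<noteq> 0"
    using exists_emeasure_abs_gt_nonzero assms by blast
  have "AE \<omega> in S. \<exists>\<^sub>F k in sequentially. \<omega> k \<in> {x\<in>space M. \<epsilon> < \<bar>g x\<bar>}"
    by (rule AE_frequently_in[OF _ pos]) measurable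
  moreover assume "AE \<omega> in S. (\<lambda>k. g (\<omega> k)) \<longlonglongrightarrow> 0"
  ultimately have "AE \<omega> in S. False"
  proof eventually_elim
    case (elim \<omega>)
    have "\<forall>\<^sub>F k in sequentially. \<bar>g (\<omega> k)\<bar> < \<epsilon>"
      using elim(2) \<open>\<epsilon> > 0\<close> by (auto simp: tendsto_iff dist_real_def)
    with elim(1) have "\<exists>\<^sub>F k in sequentially. False"
      by (rule frequently_eventually_frequently[THEN frequently_elim1]) auto
    then show False
      by simp
  qed
  then show False
    by (simp add: P.AE_False)
qed

lemma (in prob_space) iid_sequence_distr_PiM:
  fixes X :: "'i \<Rightarrow> 'a \<Rightarrow> 'b::topological_space"
  assumes indep: "indep_vars (\<lambda>_. borel) X UNIV"
    and identical: "\<And>i. distr M borel (X i) = N"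
  shows measurable_iid_sequence: "(\<lambda>x i. X i x) \<in> measurable M (\<Pi>\<^sub>M i\<in>UNIV. N)"
    and distr_iid_sequence: "distr M (\<Pi>\<^sub>M i\<in>UNIV. N) (\<lambda>x i. X i x) = (\<Pi>\<^sub>M i\<in>UNIV. N)"
proof -
  have sets_N: "sets N = sets borel"
    by (metis identical sets_distr)
  have "X i \<in> measurable M N" for i
    using indep by (simp add: indep_vars_def measurable_cong_sets[OF refl sets_N])
  then show "(\<lambda>x i. X i x) \<in> measurable M (\<Pi>\<^sub>M i\<in>UNIV. N)"
    using measurable_restrict[of UNIV X M "\<lambda>_. N"] by (simp add: restrict_UNIV)
  have "distr M (\<Pi>\<^sub>M i\<in>UNIV. N) (\<lambda>x i. X i x) = distr M (\<Pi>\<^sub>M i\<in>UNIV. borel) (\<lambda>x. \<lambda>i\<in>UNIV. X i x)"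
    by (intro distr_cong sets_PiM_cong) (simp_all add: sets_N restrict_UNIV)
  also have "\<dots> = (\<Pi>\<^sub>M i\<in>UNIV. distr M borel (X i))"
    using indep indep_vars_iff_distr_eq_PiM[of UNIV X "\<lambda>_. borel"] by (simp add: indep_vars_def)
  finally show "distr M (\<Pi>\<^sub>M i\<in>UNIV. N) (\<lambda>x i. X i x) = (\<Pi>\<^sub>M i\<in>UNIV. N)"
    by (simp add: identical)
qed

definition perpetuity_term :: "(nat \<Rightarrow> real \<times> real) \<Rightarrow> nat \<Rightarrow> real" where
  "perpetuity_term \<omega> k = (\<Prod>i<k. fst (\<omega> i)) * snd (\<omega> k)"

lemma perpetuity_term_case_nat_Suc:
  "perpetuity_term (case_nat s \<omega>) (Suc k) = fst s * perpetuity_term \<omega> k"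
  unfolding perpetuity_term_def prod.lessThan_Suc_shift by (simp add: mult.assoc)

lemma suminf_perpetuity_term_case_nat:
  assumes "summable (perpetuity_term (case_nat s \<omega>))"
  shows "suminf (perpetuity_term (case_nat s \<omega>)) = snd s + fst s * suminf (perpetuity_term \<omega>)"
proof -
  have head: "suminf (perpetuity_term (case_nat s \<omega>)) = snd s + (\<Sum>k. fst s * perpetuity_term \<omega> k)"
    using suminf_split_head[OF assms]
    by (simp add: perpetuity_term_case_nat_Suc) (simp add: perpetuity_term_def)
  show ?thesis
  proof (cases "fst s = 0")
    case False
    have "summable (\<lambda>k. fst s * perpetuity_term \<omega> k)"
      using summable_Suc_iff[THEN iffD2, OF assms] by (simp add: perpetuity_term_case_nat_Suc)
    with False have "summable (perpetuity_term \<omega>)"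
      by (simp add: summable_cmult_iff)
    with head show ?thesis
      by (simp add: suminf_mult)
  qed (use head in simp)
qed

locale pair_sequence_space = sequence_space M for M :: "(real \<times> real) measure" +
  assumes sets_M: "sets M = sets borel"
begin

lemma measurable_fst_snd [measurable]:
  "fst \<in> borel_measurable M" "snd \<in> borel_measurable M"
  by (simp_all add: measurable_cong_sets[OF sets_M refl] borel_measurable_continuous_onI
      continuous_on_fst continuous_on_snd continuous_on_id)

lemma measurable_perpetuity_term [measurable]:
  "(\<lambda>\<omega>. perpetuity_term \<omega> k) \<in> borel_measurable S"
  unfolding perpetuity_term_def by measurable

lemma nn_integral_perpetuity_fixed_point:
  fixes f :: "real \<Rightarrow> ennreal"
  assumes [measurable]: "f \<in> borel_measurable borel"
    and summable: "AE \<omega> in S. summable (perpetuity_term \<omega>)"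
  shows "(\<integral>\<^sup>+\<omega>. f (suminf (perpetuity_term \<omega>)) \<partial>S)
       = (\<integral>\<^sup>+s. \<integral>\<^sup>+\<omega>. f (snd s + fst s * suminf (perpetuity_term \<omega>)) \<partial>S \<partial>M)"
proof -
  have shift [measurable]: "(\<lambda>(s, \<omega>). case_nat s \<omega>) \<in> measurable (M \<Otimes>\<^sub>M S) S"
    by measurable
  have "AE z in M \<Otimes>\<^sub>M S. summable (perpetuity_term ((\<lambda>(s, \<omega>). case_nat s \<omega>) z))"
    by (rule AE_distrD[OF shift]) (unfold PiM_iter, rule summable)
  then have eq_AE: "AE z in M \<Otimes>\<^sub>M S. f (suminf (perpetuity_term (case_nat (fst z) (snd z))))
      = f (snd (fst z) + fst (fst z) * suminf (perpetuity_term (snd z)))"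
    by eventually_elim (simp add: suminf_perpetuity_term_case_nat split_beta)
  have "(\<integral>\<^sup>+\<omega>. f (suminf (perpetuity_term \<omega>)) \<partial>S)
      = (\<integral>\<^sup>+z. f (suminf (perpetuity_term (case_nat (fst z) (snd z)))) \<partial>(M \<Otimes>\<^sub>M S))"
    by (subst (1) PiM_iter[symmetric], subst nn_integral_distr) (auto simp: split_beta)
  also have "\<dots> = (\<integral>\<^sup>+z. f (snd (fst z) + fst (fst z) * suminf (perpetuity_term (snd z))) \<partial>(M \<Otimes>\<^sub>M S))"
    using eq_AE by (rule nn_integral_cong_AE)
  also have "\<dots> = (\<integral>\<^sup>+s. \<integral>\<^sup>+\<omega>. f (snd s + fst s * suminf (perpetuity_term \<omega>)) \<partial>S \<partial>M)"
  proof -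
    have "(\<lambda>z. f (snd (fst z) + fst (fst z) * suminf (perpetuity_term (snd z))))
        \<in> borel_measurable (M \<Otimes>\<^sub>M S)"
      by measurable
    from P.nn_integral_fst[OF this] show ?thesis
      by simp
  qed
  finally show ?thesis .
qed

lemma not_AE_fst_eq_one:
  assumes summable: "AE \<omega> in S. summable (perpetuity_term \<omega>)"
    and snd_not_AE_zero: "measure M {s\<in>space M. snd s = 0} < 1"
  shows "\<not> (AE s in M. fst s = 1)"
proof
  have "emeasure M {s\<in>space M. snd s \<noteq> 0} = emeasure M (space M - {s\<in>space M. snd s = 0})"
    by (intro arg_cong[where f="emeasure M"]) auto
  also have "\<dots> = ennreal (1 - measure M {s\<in>space M. snd s = 0})"
    by (subst M.emeasure_eq_measure, subst M.prob_compl) simp_all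
  finally have snd_nonzero: "emeasure M {s\<in>space M. snd s \<noteq> 0} \<noteq> 0"
    using snd_not_AE_zero by simp
  assume "AE s in M. fst s = 1"
  then have "AE \<omega> in S. \<forall>i. fst (\<omega> i) = 1"
    by (subst AE_all_countable) (auto intro: AE_component)
  with summable have "AE \<omega> in S. (\<lambda>k. snd (\<omega> k)) \<longlonglongrightarrow> 0"
    by eventually_elim (auto dest!: summable_LIMSEQ_zero simp: perpetuity_term_def[abs_def])
  with snd_nonzero show False
    using not_AE_tendsto_zero[of snd] by auto
qed

lemma exp_moment_unit_multiplier_less_one:
  assumes summable: "AE \<omega> in S. summable (perpetuity_term \<omega>)"
    and snd_not_AE_zero: "measure M {s\<in>space M. snd s = 0} < 1"
    and finite: "(\<integral>\<^sup>+\<omega>. ennreal (exp (r * suminf (perpetuity_term \<omega>))) \<partial>S) < \<infinity>"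
  shows "(\<integral>\<^sup>+s. ennreal (exp (r * snd s) * indicator {s. fst s = 1} s) \<partial>M) < 1"
proof -
  define \<phi> where "\<phi> = (\<integral>\<^sup>+\<omega>. ennreal (exp (r * suminf (perpetuity_term \<omega>))) \<partial>S)"
  define I where "I s = (\<integral>\<^sup>+\<omega>. ennreal (exp (r * (snd s + fst s * suminf (perpetuity_term \<omega>)))) \<partial>S)"
    for s :: "real \<times> real"
  define c where "c = (\<integral>\<^sup>+s. ennreal (exp (r * snd s) * indicator {s. fst s = 1} s) \<partial>M)"
  define R where "R = (\<integral>\<^sup>+s. indicator {s. fst s \<noteq> 1} s * I s \<partial>M)"
  have I_measurable [measurable]: "I \<in> borel_measurable M"
    unfolding I_def by measurable
  have I_unit: "I s = ennreal (exp (r * snd s)) * \<phi>" if "fst s = 1" for s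
    unfolding I_def \<phi>_def using that
    by (subst nn_integral_cmult[symmetric]) (auto simp: distrib_left exp_add ennreal_mult)
  have I_nonzero: "I s \<noteq> 0" for s
    unfolding I_def by (subst nn_integral_0_iff_AE) (auto simp: P.AE_False)
  have "\<phi> = (\<integral>\<^sup>+s. I s \<partial>M)"
    unfolding \<phi>_def I_def
    by (rule nn_integral_perpetuity_fixed_point[of "\<lambda>x. ennreal (exp (r * x))", OF _ summable])
      measurable
  also have "\<dots> = (\<integral>\<^sup>+s. ennreal (exp (r * snd s) * indicator {s. fst s = 1} s) * \<phi>
                        + indicator {s. fst s \<noteq> 1} s * I s \<partial>M)"
    by (intro nn_integral_cong) (simp add: I_unit split: split_indicator)
  also have "\<dots> = c * \<phi> + R"
    unfolding c_def R_def by (subst nn_integral_add, simp_all, subst nn_integral_multc, simp_all)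
  finally have "\<phi> = c * \<phi> + R" .
  moreover have "R \<noteq> 0"
  proof
    assume "R = 0"
    then have "AE s in M. indicator {s. fst s \<noteq> 1} s * I s = 0"
      unfolding R_def by (subst (asm) nn_integral_0_iff_AE) simp_all
    then have "AE s in M. fst s = 1"
      by eventually_elim (simp add: I_nonzero split: split_indicator_asm)
    with not_AE_fst_eq_one[OF summable snd_not_AE_zero] show False
      by blast
  qed
  ultimately show ?thesis
    using ennreal_factor_less_one_of_fixed_point finite unfolding c_def \<phi>_def by blast
qed

end

theorem mainTheorem5:
  fixes M :: "'a measure" and A B :: "'a \<Rightarrow> real"
    and AB :: "nat \<Rightarrow> 'a \<Rightarrow> real \<times> real" and r :: real
  assumes "prob_space M"
    and "A \<in> borel_measurable M" and "B \<in> borel_measurable M"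
    and "prob_space.indep_vars M (\<lambda>_. borel) AB UNIV"
    and "\<And>n. distr M borel (AB n) = distr M borel (\<lambda>\<omega>. (A \<omega>, B \<omega>))"
    and "AE \<omega> in M. summable (\<lambda>k. (\<Prod>i<k. fst (AB i \<omega>)) * snd (AB k \<omega>))"
    and "measure M {\<omega> \<in> space M. A \<omega> = 0} = 0"
    and "measure M {\<omega> \<in> space M. B \<omega> = 0} < 1"
    and "\<And>c. measure M {\<omega> \<in> space M. B \<omega> + A \<omega> * c = c} < 1"
    and "measure M {\<omega> \<in> space M. A \<omega> \<in> {0<..1}} = 1"
    and "r > 0"
    and "(\<integral>\<^sup>+ \<omega>. ennreal (exp (r * perpetuity (\<lambda>i \<omega>. fst (AB i \<omega>)) (\<lambda>i \<omega>. snd (AB i \<omega>)) \<omega>)) \<partial>M) < \<infinity>"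
  shows "(\<integral>\<^sup>+ \<omega>. ennreal (exp (r * B \<omega>) * indicator {\<omega>. A \<omega> = 1} \<omega>) \<partial>M) < 1"
proof -
  interpret prob_space M by fact
  note [measurable] = assms(2,3)
  define \<mu> where "\<mu> = distr M borel (\<lambda>\<omega>. (A \<omega>, B \<omega>))"
  interpret \<mu>: prob_space \<mu>
    unfolding \<mu>_def by (rule prob_space_distr) measurable
  interpret \<mu>: pair_sequence_space \<mu>
    by unfold_locales (simp add: \<mu>_def)
  have seq [measurable]: "(\<lambda>x i. AB i x) \<in> measurable M \<mu>.S"
    and law: "distr M \<mu>.S (\<lambda>x i. AB i x) = \<mu>.S"
    using iid_sequence_distr_PiM[OF assms(4,5)] by (simp_all add: \<mu>_def)
  have summable: "AE \<omega> in \<mu>.S. summable (perpetuity_term \<omega>)"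
    using assms(6) by (subst law[symmetric], subst AE_distr_iff) (simp_all add: perpetuity_term_def[abs_def])
  have "{s::real \<times> real. snd s = 0} \<in> sets borel"
    by (intro borel_closed closed_Collect_eq continuous_intros)
  then have "measure \<mu> {s\<in>space \<mu>. snd s = 0} = measure M {\<omega>\<in>space M. B \<omega> = 0}"
    unfolding \<mu>_def by (subst measure_distr) (auto intro!: arg_cong[where f="measure M"])
  then have snd_not_AE_zero: "measure \<mu> {s\<in>space \<mu>. snd s = 0} < 1"
    using assms(8) by simp
  have finite: "(\<integral>\<^sup>+\<omega>. ennreal (exp (r * suminf (perpetuity_term \<omega>))) \<partial>\<mu>.S) < \<infinity>"
    using assms(12)
    by (subst law[symmetric], subst nn_integral_distr) (simp_all add: perpetuity_def perpetuity_term_def[abs_def])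
  have "(\<lambda>s. ennreal (exp (r * snd s) * indicator {s. fst s = 1} s)) \<in> borel_measurable \<mu>"
    by measurable
  then have "(\<integral>\<^sup>+ \<omega>. ennreal (exp (r * B \<omega>) * indicator {\<omega>. A \<omega> = 1} \<omega>) \<partial>M)
      = (\<integral>\<^sup>+s. ennreal (exp (r * snd s) * indicator {s. fst s = 1} s) \<partial>\<mu>)"
    unfolding measurable_cong_sets[OF \<mu>.sets_M refl] unfolding \<mu>_def
    by (simp add: nn_integral_distr indicator_def)
  with \<mu>.exp_moment_unit_multiplier_less_one[OF summable snd_not_AE_zero finite] show ?thesis
    by simp
qed

end
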